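(* Let $E$ be a Hermite–Biehler entire function with no real zeros and $E(0) = 1$. If $f \in \mathcal{H}^{\infty}(E)$ is a real entire function with $f(0) = \lVert f/E\rVert_\infty = 1$, then $$f(x) \geq A(x), \qquad b_{-1} \leq x \leq b_1,$$ where $b_{-1}$ is the first negative zero of $B$ and $b_1$ is the first positive zero of $B$.
   Context: An entire function $E$ is Hermite–Biehler if $\lvert E(\overline{z})\rvert < \lvert E(z)\rvert$ for all $z$ in the upper half-plane $\mathbb{C}_+$. For an entire function $g$, $g^{\#}(z) = \overline{g(\overline{z})}$; $g$ is real entire if it is real on the real axis. $\mathcal{H}^{\infty}(E)$ is the set of entire functions $f$ such that $f/E$ and $f^{\#}/E$ are bounded analytic functions on $\mathbb{C}_+$, with $\lVert f/E\rVert_\infty = \sup_{x\in\mathbb{R}} \lvert f(x)/E(x)\rvert$. Write $E = A + iB$ with $A = (E+E^{\#})/2$ and $B = (E-E^{\#})/(2i)$ real entire. *)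

theory Defs
  imports "HOL-Analysis.Analysis"
begin

definition upper_half_plane :: "complex set" where
  "upper_half_plane = {z. Im z > 0}"

definition sharp :: "(complex \<Rightarrow> complex) \<Rightarrow> complex \<Rightarrow> complex" where
  "sharp g z = cnj (g (cnj z))"

definition hermite_biehler :: "(complex \<Rightarrow> complex) \<Rightarrow> bool" where
  "hermite_biehler E \<longleftrightarrow> E holomorphic_on UNIV \<and>
     (\<forall>z\<in>upper_half_plane. cmod (E (cnj z)) < cmod (E z))"

definition real_entire :: "(complex \<Rightarrow> complex) \<Rightarrow> bool" where
  "real_entire g \<longleftrightarrow> g holomorphic_on UNIV \<and> (\<forall>x::real. g (of_real x) \<in> \<real>)"

definition A_of :: "(complex \<Rightarrow> complex) \<Rightarrow> complex \<Rightarrow> complex" where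
  "A_of E z = (E z + sharp E z) / 2"

definition B_of :: "(complex \<Rightarrow> complex) \<Rightarrow> complex \<Rightarrow> complex" where
  "B_of E z = (E z - sharp E z) / (2 * \<i>)"

definition H_inf :: "(complex \<Rightarrow> complex) \<Rightarrow> (complex \<Rightarrow> complex) set" where
  "H_inf E = {f. f holomorphic_on UNIV \<and>
      (\<lambda>z. f z / E z) holomorphic_on upper_half_plane \<and>
      (\<lambda>z. sharp f z / E z) holomorphic_on upper_half_plane \<and>
      bounded ((\<lambda>z. f z / E z) ` upper_half_plane) \<and>
      bounded ((\<lambda>z. sharp f z / E z) ` upper_half_plane)}"

definition sup_norm_real :: "(complex \<Rightarrow> complex) \<Rightarrow> (complex \<Rightarrow> complex) \<Rightarrow> real" where
  "sup_norm_real f E = (SUP x::real. cmod (f (of_real x) / E (of_real x)))"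

end

theory Submission
  imports Defs "HOL-Complex_Analysis.Complex_Analysis"
begin

text \<open>Phragmen--Lindelof gives \<open>|f| \<le> |E|\<close> on the closed upper half-plane, and applied to
  \<open>(E\<^sup># - \<epsilon> f) / (E - \<epsilon> f)\<close> it gives \<open>|E\<^sup># - f| \<le> |E - f|\<close> there. Writing \<open>E = A + \<i> B\<close>, this
  says that \<open>R = (f - A) / B\<close> maps the upper half-plane into the closed lower half-plane; since
  \<open>R\<close> is real on the real axis, it decreases on every real interval free of zeros of \<open>B\<close>. At \<open>0\<close> both
  \<open>f - A\<close> and \<open>B\<close> vanish, \<open>(f - A)'(0) = 0\<close> because \<open>|f / E| \<le> 1\<close> on the real axis with equality
  at \<open>0\<close>, and \<open>B'(0) < 0\<close> because \<open>B / A\<close> maps the upper half-plane into the lower one. Hence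
  \<open>R \<rightarrow> 0\<close> at \<open>0\<close>, so \<open>R \<ge> 0\<close> on \<open>(b\<^sub>-\<^sub>1, 0)\<close>, where \<open>B > 0\<close>, and \<open>R \<le> 0\<close> on \<open>(0, b\<^sub>1)\<close>, where
  \<open>B < 0\<close>; in both cases \<open>f \<ge> A\<close>.\<close>

lemma one_le_norm_one_minus_ii_mult:
  assumes "e \<ge> 0" "Im z \<ge> 0"
  shows "1 \<le> cmod (1 - \<i> * of_real e * z)"
proof -
  have "1 \<le> Re (1 - \<i> * of_real e * z)"
    using assms by simp
  then show ?thesis
    using complex_Re_le_cmod order_trans by blast
qed

lemma mult_norm_le_norm_one_minus_ii_mult:
  assumes "e \<ge> 0" "Im z \<ge> 0"
  shows "e * cmod z \<le> cmod (1 - \<i> * of_real e * z)"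
proof -
  have "(e * cmod z)\<^sup>2 = (e * Re z)\<^sup>2 + (e * Im z)\<^sup>2"
    by (simp add: power_mult_distrib cmod_power2 algebra_simps)
  also have "\<dots> \<le> (e * Re z)\<^sup>2 + (1 + e * Im z)\<^sup>2"
    using assms by (simp add: power2_eq_square algebra_simps)
  also have "\<dots> = (cmod (1 - \<i> * of_real e * z))\<^sup>2"
    by (simp only: cmod_power2) (simp add: power2_eq_square algebra_simps)
  finally show ?thesis
    by (meson norm_ge_zero power2_le_imp_le)
qed

lemma maximum_modulus_upper_half_disc:
  fixes q :: "complex \<Rightarrow> complex"
  assumes hol: "q holomorphic_on {z. Im z \<ge> 0}"
    and real: "\<And>x::real. cmod (q (of_real x)) \<le> B"
    and arc: "\<And>z. Im z > 0 \<Longrightarrow> cmod z = \<rho> \<Longrightarrow> cmod (q z) \<le> B"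
    and "Im z > 0" "cmod z < \<rho>"
  shows "cmod (q z) \<le> B"
proof -
  define S where "S = {z. Im z > 0 \<and> cmod z < \<rho>}"
  have "open S"
    unfolding S_def by (intro open_Collect_conj open_Collect_less continuous_intros)
  have closure_S: "closure S \<subseteq> {z. Im z \<ge> 0 \<and> cmod z \<le> \<rho>}"
    by (rule closure_minimal)
      (auto simp: S_def intro!: closed_Collect_conj closed_Collect_le continuous_intros)
  show ?thesis
  proof (rule maximum_modulus_frontier[where f = q and S = S])
    show "q holomorphic_on interior S"
      using holomorphic_on_subset[OF hol] \<open>open S\<close> by (force simp: interior_open S_def)
    show "continuous_on (closure S) q"
      using holomorphic_on_imp_continuous_on[OF hol] closure_S continuous_on_subset by blast
    show "bounded S"
      unfolding S_def bounded_iff by (auto intro: less_imp_le)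
    show "z \<in> S"
      using \<open>Im z > 0\<close> \<open>cmod z < \<rho>\<close> by (simp add: S_def)
  next
    fix w assume "w \<in> frontier S"
    then have "Im w \<ge> 0" "cmod w \<le> \<rho>" "w \<notin> S"
      using closure_S \<open>open S\<close> by (auto simp: frontier_def interior_open)
    then consider "Im w = 0" | "Im w > 0" "cmod w = \<rho>"
      by (force simp: S_def)
    then show "cmod (q w) \<le> B"
      using real[of "Re w"] arc by cases (metis complex_is_Real_iff of_real_Re, simp)
  qed
qed

text \<open>The damped function \<open>g z / (1 - \<i> e z)\<close> is at most \<open>1\<close> on large half-circles, so the maximum
  principle on half-discs applies to it; then \<open>e \<rightarrow> 0\<close>.\<close>
lemma phragmen_lindelof_upper_half_plane:
  fixes g :: "complex \<Rightarrow> complex"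
  assumes U: "open U" "{z. Im z \<ge> 0} \<subseteq> U" and hol: "g holomorphic_on U"
    and bound: "\<And>z. Im z > 0 \<Longrightarrow> cmod (g z) \<le> M"
    and real: "\<And>x::real. cmod (g (of_real x)) \<le> 1"
    and "Im z0 \<ge> 0"
  shows "cmod (g z0) \<le> 1"
proof (cases "Im z0 = 0")
  case True
  then show ?thesis
    using real[of "Re z0"] by (metis complex_is_Real_iff of_real_Re)
next
  case False
  with \<open>Im z0 \<ge> 0\<close> have "Im z0 > 0"
    by simp
  show ?thesis
  proof (rule field_le_epsilon)
    fix \<epsilon> :: real assume "\<epsilon> > 0"
    define e where "e = \<epsilon> / (cmod z0 + 1)"
    have e: "e > 0" and e_z0: "e * cmod z0 \<le> \<epsilon>"
      using \<open>\<epsilon> > 0\<close> by (auto simp: e_def field_simps add_pos_nonneg)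
    define den where "den z = 1 - \<i> * of_real e * z" for z
    define \<rho> where "\<rho> = cmod z0 + max M 1 / e + 1"
    have den_ge_1: "1 \<le> cmod (den z)" if "Im z \<ge> 0" for z
      unfolding den_def using one_le_norm_one_minus_ii_mult e that by simp
    have "e * \<rho> = e * cmod z0 + max M 1 + e"
      using e by (simp add: \<rho>_def field_simps)
    then have "max M 1 \<le> e * \<rho>"
      using e mult_nonneg_nonneg[OF less_imp_le[OF e] norm_ge_zero[of z0]] by linarith
    have den_ge_M: "max M 1 \<le> cmod (den z)" if "Im z \<ge> 0" "cmod z = \<rho>" for z
    proof -
      have "e * \<rho> \<le> cmod (den z)"
        using mult_norm_le_norm_one_minus_ii_mult[of e z] e that by (simp add: den_def)
      with \<open>max M 1 \<le> e * \<rho>\<close> show ?thesis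
        by linarith
    qed
    have "den z \<noteq> 0" if "Im z \<ge> 0" for z
      using den_ge_1[OF that] by auto
    then have "(\<lambda>z. g z / den z) holomorphic_on {z. Im z \<ge> 0}"
      unfolding den_def
      by (intro holomorphic_intros holomorphic_on_subset[OF hol U(2)]) (auto simp: den_def)
    then have "cmod (g z0 / den z0) \<le> 1"
    proof (rule maximum_modulus_upper_half_disc)
      show "cmod (g (of_real x) / den (of_real x)) \<le> 1" for x
        using real[of x] den_ge_1[of "of_real x"] by (simp add: norm_divide divide_le_eq_1)
      show "cmod (g z / den z) \<le> 1" if "Im z > 0" "cmod z = \<rho>" for z
        using bound[OF that(1)] den_ge_M[of z] that by (simp add: norm_divide divide_le_eq_1)
      show "cmod z0 < \<rho>"
        using e by (simp add: \<rho>_def add_nonneg_pos)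
    qed fact
    then have "cmod (g z0) \<le> cmod (den z0)"
      using den_ge_1[of z0] \<open>Im z0 > 0\<close> by (auto simp: norm_divide divide_le_eq_1)
    also have "\<dots> \<le> 1 + e * cmod z0"
      using norm_triangle_ineq4[of 1 "\<i> * of_real e * z0"] e by (simp add: den_def norm_mult)
    finally show "cmod (g z0) \<le> 1 + \<epsilon>"
      using e_z0 by simp
  qed
qed

lemma has_real_derivative_Re_of_real:
  assumes "h holomorphic_on S" "open S" "of_real t \<in> S"
  shows "((\<lambda>x. Re (h (of_real x))) has_real_derivative Re (deriv h (of_real t))) (at t)"
  using has_vector_derivative_real_field[OF holomorphic_derivI[OF assms]]
  by (rule has_field_derivative_Re)

lemma Im_deriv_of_real_eq_0:
  assumes "h holomorphic_on UNIV" "\<And>x::real. Im (h (of_real x)) = 0"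
  shows "Im (deriv h (of_real t)) = 0"
proof -
  have "((\<lambda>x. h (of_real x)) has_vector_derivative deriv h (of_real t)) (at t)"
    using holomorphic_derivI[OF assms(1)] by (intro has_vector_derivative_real_field) auto
  then have "((\<lambda>x. 0) has_real_derivative Im (deriv h (of_real t))) (at t)"
    using assms(2) by (simp add: has_vector_derivative_complex_iff)
  then show ?thesis
    using DERIV_const DERIV_unique by blast
qed

text \<open>The difference quotient of \<open>h\<close> in the direction \<open>\<i>\<close> at a real point where \<open>h\<close> is real has
  real part \<open>Im h(x + \<i> y) / y \<le> 0\<close>.\<close>
lemma Re_deriv_nonpos_of_Im_nonpos_upper:
  assumes hol: "h holomorphic_on S" and S: "open S" "of_real x \<in> S"
    and real: "Im (h (of_real x)) = 0"
    and upper: "\<And>z. z \<in> S \<Longrightarrow> Im z > 0 \<Longrightarrow> Im (h z) \<le> 0"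
  shows "Re (deriv h (of_real x)) \<le> 0"
proof -
  define c where "c = (of_real x :: complex)"
  have "(h has_field_derivative deriv h c) (at c)"
    using assms holomorphic_derivI unfolding c_def by blast
  then have lim: "((\<lambda>w. (h w - h c) / (w - c)) \<longlongrightarrow> deriv h c) (at c)"
    by (simp add: has_field_derivative_iff)
  have "filterlim (\<lambda>y::real. c + \<i> * of_real y) (at c) (at_right 0)"
    by (rule filterlim_atI) (auto intro!: tendsto_eq_intros simp: eventually_at_filter)
  from filterlim_compose[OF lim this]
  have "((\<lambda>y::real. Re ((h (c + \<i> * of_real y) - h c) / (\<i> * of_real y))) \<longlongrightarrow> Re (deriv h c))
      (at_right 0)"
    by (intro tendsto_Re) simp
  moreover have "\<forall>\<^sub>F y in at_right 0. Re ((h (c + \<i> * of_real y) - h c) / (\<i> * of_real y)) \<le> 0"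
  proof -
    obtain e where e: "e > 0" "ball c e \<subseteq> S"
      using S openE unfolding c_def by blast
    have "\<forall>\<^sub>F y in at_right 0. y \<in> {0<..<e}"
      using eventually_at_right_real[OF e(1)] .
    then show ?thesis
    proof eventually_elim
      case (elim y)
      then have "c + \<i> * of_real y \<in> S"
        using e(2) by (auto simp: dist_norm norm_mult)
      then have "Im (h (c + \<i> * of_real y)) \<le> 0"
        using elim upper by (simp add: c_def)
      then show ?case
        using elim real by (simp add: Re_divide power2_eq_square c_def divide_nonpos_pos)
    qed
  qed
  ultimately show ?thesis
    unfolding c_def by (intro tendsto_upperbound) auto
qed

lemma Re_of_real_antimono_of_Im_nonpos_upper:
  assumes hol: "h holomorphic_on S" and "open S" and "s \<le> t"
    and segment: "\<And>x. x \<in> {s..t} \<Longrightarrow> of_real x \<in> S \<and> Im (h (of_real x)) = 0"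
    and upper: "\<And>z. z \<in> S \<Longrightarrow> Im z > 0 \<Longrightarrow> Im (h z) \<le> 0"
  shows "Re (h (of_real t)) \<le> Re (h (of_real s))"
proof (rule DERIV_nonpos_imp_nonincreasing[OF \<open>s \<le> t\<close>])
  fix x assume "s \<le> x" "x \<le> t"
  then have "of_real x \<in> S" "Im (h (of_real x)) = 0"
    using segment by auto
  then show "\<exists>y. ((\<lambda>x. Re (h (of_real x))) has_real_derivative y) (at x) \<and> y \<le> 0"
    using has_real_derivative_Re_of_real[OF hol \<open>open S\<close>]
      Re_deriv_nonpos_of_Im_nonpos_upper[OF hol \<open>open S\<close> _ _ upper] by blast
qed

lemma Re_deriv_eq_0_of_norm_of_real_le_1:
  assumes "F holomorphic_on S" "open S" "of_real x \<in> S"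
    and "\<And>y::real. cmod (F (of_real y)) \<le> 1" and "F (of_real x) = 1"
  shows "Re (deriv F (of_real x)) = 0"
proof (rule DERIV_local_max[OF has_real_derivative_Re_of_real[OF assms(1-3)] zero_less_one])
  show "\<forall>y. \<bar>x - y\<bar> < 1 \<longrightarrow> Re (F (of_real y)) \<le> Re (F (of_real x))"
    using assms(4,5) complex_Re_le_cmod order_trans by fastforce
qed

lemma exists_Im_mult_cis_pos:
  fixes c :: complex
  assumes "c \<noteq> 0" "n \<ge> 2"
  shows "\<exists>\<theta>\<in>{0..pi}. Im (c * cis (real n * \<theta>)) > 0"
proof (rule ccontr)
  assume "\<not> ?thesis"
  then have nonpos: "Im (c * cis (real n * \<theta>)) \<le> 0" if "0 \<le> \<theta>" "\<theta> \<le> pi" for \<theta>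
    using that by force
  have n: "real n \<ge> 2"
    using assms(2) by simp
  have "Im c \<le> 0"
    using nonpos[of 0] by simp
  moreover have "- Im c \<le> 0"
    using nonpos[of "pi / n"] n by (simp add: field_simps cis.ctr)
  moreover have "Re c \<le> 0"
    using nonpos[of "pi / (2 * n)"] n by (simp add: field_simps cis.ctr)
  moreover have "- Re c \<le> 0"
  proof -
    have "sin (pi * 3 / 2) = -1" "cos (pi * 3 / 2) = 0"
      using sin_add[of "pi / 2" pi] cos_add[of "pi / 2" pi] by (simp_all add: field_simps)
    then show ?thesis
      using nonpos[of "3 * pi / (2 * n)"] n by (simp add: field_simps cis.ctr)
  qed
  ultimately show False
    using assms(1) by (simp add: complex_eq_iff)
qed

text \<open>Near \<open>0\<close>, \<open>g\<close> behaves like \<open>p 0 w\<^sup>n\<close>, which maps the upper half-disc onto a sector of opening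
  \<open>n \<pi>\<close>; for \<open>n \<ge> 2\<close> this sector meets the upper half-plane.\<close>
lemma order_le_1_of_Im_nonpos_upper:
  fixes g p :: "complex \<Rightarrow> complex"
  assumes "isCont p 0" "p 0 \<noteq> 0" "\<rho> > 0"
    and factor: "\<And>w. cmod w < \<rho> \<Longrightarrow> g w = p w * w ^ n"
    and upper: "\<And>w. cmod w < \<rho> \<Longrightarrow> Im w \<ge> 0 \<Longrightarrow> Im (g w) \<le> 0"
  shows "n \<le> 1"
proof (rule ccontr)
  assume "\<not> n \<le> 1"
  with \<open>p 0 \<noteq> 0\<close> obtain \<theta> where \<theta>: "0 \<le> \<theta>" "\<theta> \<le> pi" and pos: "Im (p 0 * cis (real n * \<theta>)) > 0"
    using exists_Im_mult_cis_pos[of "p 0" n] by auto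
  have "((\<lambda>s::real. of_real s * cis \<theta>) \<longlongrightarrow> 0) (at_right 0)"
    by (auto intro!: tendsto_eq_intros)
  then have "((\<lambda>s::real. Im (p (of_real s * cis \<theta>) * cis (real n * \<theta>)))
      \<longlongrightarrow> Im (p 0 * cis (real n * \<theta>))) (at_right 0)"
    using \<open>isCont p 0\<close> by (intro tendsto_intros isCont_tendsto_compose[where g = p])
  then have "\<forall>\<^sub>F s in at_right 0. Im (p (of_real s * cis \<theta>) * cis (real n * \<theta>)) > 0"
    using pos order_tendstoD(1) by blast
  moreover have "\<forall>\<^sub>F s in at_right 0. s \<in> {0<..<\<rho>}"
    using eventually_at_right_real[OF \<open>\<rho> > 0\<close>] .
  ultimately have "\<forall>\<^sub>F s in at_right 0.
      Im (p (of_real s * cis \<theta>) * cis (real n * \<theta>)) > 0 \<and> s \<in> {0<..<\<rho>}"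
    by (rule eventually_conj)
  then obtain s where s: "0 < s" "s < \<rho>" and pos_s: "Im (p (of_real s * cis \<theta>) * cis (real n * \<theta>)) > 0"
    using eventually_happens'[OF trivial_limit_at_right_real] by auto
  define w where "w = of_real s * cis \<theta>"
  have "cmod w < \<rho>" "Im w \<ge> 0"
    using s \<theta> by (auto simp: w_def norm_mult sin_ge_zero)
  then have "Im (g w) \<le> 0"
    by (rule upper)
  moreover have "g w = of_real (s ^ n) * (p w * cis (real n * \<theta>))"
    using factor[OF \<open>cmod w < \<rho>\<close>] by (simp add: w_def power_mult_distrib Complex.DeMoivre)
  moreover have "0 < s ^ n"
    using s by simp
  ultimately show False
    using pos_s by (simp add: w_def) (metis mult_pos_pos not_le)
qed

lemma deriv_nonzero_of_Im_nonpos_upper: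
  fixes g :: "complex \<Rightarrow> complex"
  assumes hol: "g holomorphic_on ball 0 r" and "g 0 = 0"
    and upper: "\<And>z. z \<in> ball 0 r \<Longrightarrow> Im z \<ge> 0 \<Longrightarrow> Im (g z) \<le> 0"
    and nonzero: "\<exists>w\<in>ball 0 r. g w \<noteq> 0"
  shows "deriv g 0 \<noteq> 0"
proof -
  have "0 \<in> ball (0::complex) r"
    using nonzero by (auto intro: order.strict_trans1[OF norm_ge_zero])
  note zorder = zorder_exist_zero[OF hol open_ball connected_ball this nonzero]
  define n where "n = nat (zorder g 0)"
  define p where "p = zor_poly g 0"
  have "n > 0"
    using zorder[THEN conjunct1] \<open>g 0 = 0\<close> by (simp add: n_def)
  obtain \<rho> where "\<rho> > 0" "cball (0::complex) \<rho> \<subseteq> ball 0 r" "p holomorphic_on cball 0 \<rho>"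
    and factor: "\<forall>w\<in>cball 0 \<rho>. g w = p w * w ^ n \<and> p w \<noteq> 0"
    using zorder[THEN conjunct2] unfolding diff_zero n_def[symmetric] p_def[symmetric] by blast
  have hol_p: "p holomorphic_on ball 0 \<rho>"
    using \<open>p holomorphic_on cball 0 \<rho>\<close> ball_subset_cball by (rule holomorphic_on_subset)
  have "p 0 \<noteq> 0"
    using factor \<open>\<rho> > 0\<close> by simp
  have "isCont p 0"
    using holomorphic_on_imp_continuous_on[OF hol_p] \<open>\<rho> > 0\<close>
    by (simp add: continuous_on_eq_continuous_at)
  then have "n = 1"
    using order_le_1_of_Im_nonpos_upper[of p \<rho> g n] \<open>p 0 \<noteq> 0\<close> \<open>\<rho> > 0\<close> \<open>n > 0\<close> factor upper
      \<open>cball 0 \<rho> \<subseteq> ball 0 r\<close> by force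
  have "(p has_field_derivative deriv p 0) (at 0)"
    using hol_p \<open>\<rho> > 0\<close> by (intro holomorphic_derivI[of _ "ball 0 \<rho>"]) auto
  then have "((\<lambda>w. p w * w) has_field_derivative p 0) (at 0)"
    using DERIV_mult[OF _ DERIV_ident] by fastforce
  then have "(g has_field_derivative p 0) (at 0)"
    by (rule has_field_derivative_transform_within_open[where S = "ball 0 \<rho>"])
      (use \<open>\<rho> > 0\<close> factor \<open>n = 1\<close> in auto)
  then have "deriv g 0 = p 0"
    by (rule DERIV_imp_deriv)
  with \<open>p 0 \<noteq> 0\<close> show ?thesis
    by simp
qed

lemma Re_deriv_neg_of_Im_neg_upper:
  fixes g :: "complex \<Rightarrow> complex"
  assumes hol: "g holomorphic_on ball 0 r" and "r > 0" and "g 0 = 0" and "Im (deriv g 0) = 0"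
    and real: "\<And>x::real. of_real x \<in> ball (0::complex) r \<Longrightarrow> Im (g (of_real x)) = 0"
    and upper: "\<And>z. z \<in> ball 0 r \<Longrightarrow> Im z > 0 \<Longrightarrow> Im (g z) < 0"
  shows "Re (deriv g 0) < 0"
proof -
  have "Im (g z) \<le> 0" if "z \<in> ball 0 r" "Im z \<ge> 0" for z
  proof (cases "Im z = 0")
    case True
    then have "z = of_real (Re z)"
      by (simp add: complex_eq_iff)
    then show ?thesis
      using real[of "Re z"] that(1) by (metis order_refl)
  next
    case False
    then show ?thesis
      using upper[OF that(1)] that(2) by force
  qed
  moreover have "g (\<i> * of_real (r / 2)) \<noteq> 0" "\<i> * of_real (r / 2) \<in> ball 0 r"
    using upper[of "\<i> * of_real (r / 2)"] \<open>r > 0\<close> by (auto simp: norm_mult)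
  ultimately have "deriv g 0 \<noteq> 0"
    using hol \<open>g 0 = 0\<close> by (intro deriv_nonzero_of_Im_nonpos_upper[of g r]) auto
  moreover have "Re (deriv g (of_real 0)) \<le> 0"
    using \<open>r > 0\<close> \<open>g 0 = 0\<close> upper
    by (intro Re_deriv_nonpos_of_Im_nonpos_upper[OF hol open_ball]) (auto simp: less_imp_le)
  ultimately show ?thesis
    using \<open>Im (deriv g 0) = 0\<close> by (auto simp: complex_eq_iff)
qed

lemma Im_nonpos_of_norm_add_ii_le:
  assumes "cmod (w + \<i>) \<le> cmod (w - \<i>)"
  shows "Im w \<le> 0"
proof -
  have "(cmod (w + \<i>))\<^sup>2 \<le> (cmod (w - \<i>))\<^sup>2"
    using assms by (simp add: power_mono)
  then have "(Re w)\<^sup>2 + (Im w + 1)\<^sup>2 \<le> (Re w)\<^sup>2 + (Im w - 1)\<^sup>2"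
    by (simp add: cmod_power2)
  then show ?thesis
    by (simp add: power2_eq_square algebra_simps)
qed

lemma Im_diff_div_ii_add_neg:
  assumes "cmod s < cmod e"
  shows "Im ((e - s) / (\<i> * (e + s))) < 0"
proof -
  have "e + s \<noteq> 0"
    using assms by (auto simp: add_eq_0_iff)
  moreover have "cnj (e + s) \<noteq> 0"
    using \<open>e + s \<noteq> 0\<close> by (simp only: complex_cnj_zero_iff) simp
  moreover have "v / (\<i> * u) = - \<i> * (v * w) / (u * w)" if "u \<noteq> 0" "w \<noteq> 0" for u v w :: complex
    using that by (simp add: field_simps)
  ultimately have "(e - s) / (\<i> * (e + s)) = - \<i> * ((e - s) * cnj (e + s)) / ((e + s) * cnj (e + s))"
    by blast
  also have "\<dots> = - \<i> * ((e - s) * cnj (e + s)) / of_real ((cmod (e + s))\<^sup>2)"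
    by (simp only: complex_norm_square)
  finally have "(e - s) / (\<i> * (e + s)) = - \<i> * ((e - s) * cnj (e + s)) / of_real ((cmod (e + s))\<^sup>2)" .
  moreover have "Re ((e - s) * cnj (e + s)) = (cmod e)\<^sup>2 - (cmod s)\<^sup>2"
    by (simp only: cmod_power2) (simp add: algebra_simps power2_eq_square)
  moreover have "(cmod s)\<^sup>2 < (cmod e)\<^sup>2"
    using assms by (simp add: power_strict_mono)
  ultimately show ?thesis
    using \<open>e + s \<noteq> 0\<close> by (simp add: Im_divide_of_real)
qed

lemma tendsto_divide_of_has_real_derivative:
  fixes f g :: "real \<Rightarrow> real"
  assumes "(f has_real_derivative F) (at a)" "(g has_real_derivative G) (at a)" "G \<noteq> 0"
    and "f a = 0" "g a = 0"
  shows "((\<lambda>x. f x / g x) \<longlongrightarrow> F / G) (at a)"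
proof -
  have "((\<lambda>x. ((f x - f a) / (x - a)) / ((g x - g a) / (x - a))) \<longlongrightarrow> F / G) (at a)"
    using assms(1-3) by (intro tendsto_divide) (auto simp: has_field_derivative_iff)
  moreover have "\<forall>\<^sub>F x in at a. ((f x - f a) / (x - a)) / ((g x - g a) / (x - a)) = f x / g x"
    using assms(4,5) by (auto simp: eventually_at_filter)
  ultimately show ?thesis
    using tendsto_cong by force
qed

lemma nonpos_of_antimono_tendsto_0_at_right:
  fixes r :: "real \<Rightarrow> real"
  assumes "(r \<longlongrightarrow> 0) (at_right a)"
    and antimono: "\<And>x y. a < x \<Longrightarrow> x \<le> y \<Longrightarrow> y < c \<Longrightarrow> r y \<le> r x"
    and "a < x" "x < c"
  shows "r x \<le> 0"
proof (rule tendsto_lowerbound[OF assms(1) _ trivial_limit_at_right_real])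
  show "\<forall>\<^sub>F y in at_right a. r x \<le> r y"
    using eventually_at_right_real[OF \<open>a < x\<close>] by eventually_elim (use antimono \<open>x < c\<close> in auto)
qed

lemma nonneg_of_antimono_tendsto_0_at_left:
  fixes r :: "real \<Rightarrow> real"
  assumes "(r \<longlongrightarrow> 0) (at_left a)"
    and antimono: "\<And>x y. c < x \<Longrightarrow> x \<le> y \<Longrightarrow> y < a \<Longrightarrow> r y \<le> r x"
    and "c < x" "x < a"
  shows "r x \<ge> 0"
proof (rule tendsto_upperbound[OF assms(1) _ trivial_limit_at_left_real])
  show "\<forall>\<^sub>F y in at_left a. r y \<le> r x"
    using eventually_at_left_real[OF \<open>x < a\<close>] by eventually_elim (use antimono \<open>c < x\<close> in auto)
qed

lemma neg_at_right_of_has_real_derivative_neg: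
  fixes f :: "real \<Rightarrow> real"
  assumes "continuous_on {a..c} f" "(f has_real_derivative d) (at a)" "d < 0" "f a = 0"
    and nonzero: "\<And>x. a < x \<Longrightarrow> x < c \<Longrightarrow> f x \<noteq> 0"
    and "a < t" "t < c"
  shows "f t < 0"
proof (rule ccontr)
  assume "\<not> f t < 0"
  with nonzero \<open>a < t\<close> \<open>t < c\<close> have "f t > 0"
    by force
  obtain e where "e > 0" and dec: "\<And>h. 0 < h \<Longrightarrow> h < e \<Longrightarrow> f (a + h) < f a"
    using DERIV_neg_dec_right[OF assms(2,3)] by blast
  define h where "h = min e (t - a) / 2"
  have "0 < h" "h < e" "a + h < t"
    using \<open>e > 0\<close> \<open>a < t\<close> by (auto simp: h_def min_def field_simps)
  define s where "s = a + h"
  have "a < s" "s < t" "f s < 0"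
    using \<open>0 < h\<close> \<open>a + h < t\<close> dec[OF \<open>0 < h\<close> \<open>h < e\<close>] \<open>f a = 0\<close> by (auto simp: s_def)
  then obtain x where "s \<le> x" "x \<le> t" "f x = 0"
    using IVT'[of f s 0 t] \<open>f t > 0\<close> continuous_on_subset[OF assms(1)] \<open>t < c\<close> by force
  then show False
    using nonzero[of x] \<open>a < s\<close> \<open>t < c\<close> by simp
qed

lemma pos_at_left_of_has_real_derivative_neg:
  fixes f :: "real \<Rightarrow> real"
  assumes "continuous_on {c..a} f" "(f has_real_derivative d) (at a)" "d < 0" "f a = 0"
    and nonzero: "\<And>x. c < x \<Longrightarrow> x < a \<Longrightarrow> f x \<noteq> 0"
    and "c < t" "t < a"
  shows "f t > 0"
proof (rule ccontr)
  assume "\<not> f t > 0"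
  with nonzero \<open>c < t\<close> \<open>t < a\<close> have "f t < 0"
    by force
  obtain e where "e > 0" and inc: "\<And>h. 0 < h \<Longrightarrow> h < e \<Longrightarrow> f a < f (a - h)"
    using DERIV_neg_dec_left[OF assms(2,3)] by blast
  define h where "h = min e (a - t) / 2"
  have "0 < h" "h < e" "t < a - h"
    using \<open>e > 0\<close> \<open>t < a\<close> by (auto simp: h_def min_def field_simps)
  define s where "s = a - h"
  have "t < s" "s < a" "f s > 0"
    using \<open>0 < h\<close> \<open>t < a - h\<close> inc[OF \<open>0 < h\<close> \<open>h < e\<close>] \<open>f a = 0\<close> by (auto simp: s_def)
  then obtain x where "t \<le> x" "x \<le> s" "f x = 0"
    using IVT'[of f t 0 s] \<open>f t < 0\<close> continuous_on_subset[OF assms(1)] \<open>c < t\<close> by force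
  then show False
    using nonzero[of x] \<open>s < a\<close> \<open>c < t\<close> by simp
qed

lemma sharp_of_real [simp]: "sharp g (of_real x) = cnj (g (of_real x))"
  by (simp add: sharp_def)

lemma holomorphic_on_sharp:
  assumes "g holomorphic_on UNIV"
  shows "sharp g holomorphic_on UNIV"
proof -
  have "cnj \<circ> g \<circ> cnj holomorphic_on UNIV"
    using assms by (intro holomorphic_on_compose_cnj_cnj) auto
  moreover have "cnj \<circ> g \<circ> cnj = sharp g"
    by (simp add: fun_eq_iff sharp_def)
  ultimately show ?thesis
    by simp
qed

lemma A_of_of_real: "A_of E (of_real x) = of_real (Re (E (of_real x)))"
  by (simp add: A_of_def complex_eq_iff)

lemma B_of_of_real: "B_of E (of_real x) = of_real (Im (E (of_real x)))"
  by (simp add: B_of_def complex_eq_iff)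

lemma E_eq_A_of_plus_ii_B_of: "E z = A_of E z + \<i> * B_of E z"
  and sharp_eq_A_of_minus_ii_B_of: "sharp E z = A_of E z - \<i> * B_of E z"
  by (simp_all add: A_of_def B_of_def field_simps)

lemma holomorphic_on_A_of:
  "E holomorphic_on UNIV \<Longrightarrow> A_of E holomorphic_on UNIV"
  unfolding A_of_def[abs_def] by (intro holomorphic_intros holomorphic_on_sharp) auto

lemma holomorphic_on_B_of:
  "E holomorphic_on UNIV \<Longrightarrow> B_of E holomorphic_on UNIV"
  unfolding B_of_def[abs_def] by (intro holomorphic_intros holomorphic_on_sharp) auto

lemma hermite_biehler_norm_sharp_less:
  "hermite_biehler E \<Longrightarrow> Im z > 0 \<Longrightarrow> cmod (sharp E z) < cmod (E z)"
  by (simp add: hermite_biehler_def upper_half_plane_def sharp_def)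

lemma hermite_biehler_nonzero:
  assumes "hermite_biehler E" "\<And>x::real. E (of_real x) \<noteq> 0" "Im z \<ge> 0"
  shows "E z \<noteq> 0"
proof (cases "Im z = 0")
  case True
  then show ?thesis
    using assms(2)[of "Re z"] by (metis complex_is_Real_iff of_real_Re)
next
  case False
  with assms(3) have "cmod (sharp E z) < cmod (E z)"
    by (intro hermite_biehler_norm_sharp_less[OF assms(1)]) simp
  then show ?thesis
    by auto
qed

lemma hermite_biehler_B_of_nonzero:
  assumes "hermite_biehler E" "Im z > 0"
  shows "B_of E z \<noteq> 0"
  using hermite_biehler_norm_sharp_less[OF assms] by (auto simp: B_of_def)

lemma norm_of_real_le_of_upper_bound:
  assumes "isCont g (of_real x)" and bound: "\<And>z. Im z > 0 \<Longrightarrow> cmod (g z) \<le> M"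
  shows "cmod (g (of_real x)) \<le> M"
proof (rule tendsto_upperbound[OF _ _ trivial_limit_at_right_real])
  have "((\<lambda>y::real. of_real x + \<i> * of_real y) \<longlongrightarrow> of_real x) (at_right 0)"
    by (auto intro!: tendsto_eq_intros)
  then show "((\<lambda>y. cmod (g (of_real x + \<i> * of_real y))) \<longlongrightarrow> cmod (g (of_real x))) (at_right 0)"
    by (intro tendsto_norm isCont_tendsto_compose[OF assms(1)])
  show "\<forall>\<^sub>F y in at_right 0. cmod (g (of_real x + \<i> * of_real y)) \<le> M"
    using bound by (auto simp: eventually_at_filter)
qed

lemma H_inf_norm_le:
  assumes HB: "hermite_biehler E" and E_real: "\<And>x::real. E (of_real x) \<noteq> 0"
    and "f \<in> H_inf E" and "sup_norm_real f E \<le> 1" and "Im z \<ge> 0"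
  shows "cmod (f z) \<le> cmod (E z)"
proof -
  define F where "F z = f z / E z" for z
  define U where "U = {z. E z \<noteq> 0}"
  have hol_E: "E holomorphic_on UNIV" and hol_f: "f holomorphic_on UNIV"
    using HB \<open>f \<in> H_inf E\<close> by (auto simp: hermite_biehler_def H_inf_def)
  have "open U"
    unfolding U_def using holomorphic_on_imp_continuous_on[OF hol_E]
    by (intro open_Collect_neq) auto
  have upper_U: "{z. Im z \<ge> 0} \<subseteq> U"
    using hermite_biehler_nonzero[OF HB E_real] by (auto simp: U_def)
  have hol_F: "F holomorphic_on U"
    unfolding F_def U_def
    by (intro holomorphic_intros holomorphic_on_subset[OF hol_E] holomorphic_on_subset[OF hol_f]) auto
  obtain M where M: "\<And>z. Im z > 0 \<Longrightarrow> cmod (F z) \<le> M"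
    using \<open>f \<in> H_inf E\<close> by (auto simp: H_inf_def bounded_iff upper_half_plane_def F_def)
  have "isCont F (of_real x)" for x
    using holomorphic_on_imp_continuous_on[OF hol_F] \<open>open U\<close> subsetD[OF upper_U, of "of_real x"]
    by (simp add: continuous_on_eq_continuous_at)
  then have "cmod (F (of_real x)) \<le> M" for x
    using M by (rule norm_of_real_le_of_upper_bound)
  then have "cmod (F (of_real x)) \<le> sup_norm_real f E" for x
    unfolding sup_norm_real_def F_def by (intro cSUP_upper bdd_aboveI2) auto
  then have "cmod (F z) \<le> 1"
    using phragmen_lindelof_upper_half_plane[OF \<open>open U\<close> upper_U hol_F M] \<open>Im z \<ge> 0\<close>
      \<open>sup_norm_real f E \<le> 1\<close> order_trans by blast
  then show ?thesis
    using hermite_biehler_nonzero[OF HB E_real \<open>Im z \<ge> 0\<close>]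
    by (simp add: F_def norm_divide divide_le_eq_1)
qed

lemma norm_diff_scaled_ge:
  assumes "cmod b \<le> cmod a" "\<epsilon> \<ge> 0"
  shows "(1 - \<epsilon>) * cmod a \<le> cmod (a - of_real \<epsilon> * b)"
proof -
  have "cmod a - \<epsilon> * cmod b \<le> cmod (a - of_real \<epsilon> * b)"
    using norm_triangle_ineq2[of a "of_real \<epsilon> * b"] assms(2) by (simp add: norm_mult)
  moreover have "\<epsilon> * cmod b \<le> \<epsilon> * cmod a"
    using assms by (simp add: mult_left_mono)
  ultimately show ?thesis
    by (simp add: left_diff_distrib)
qed

text \<open>For \<open>\<epsilon> < 1\<close> the denominator of \<open>(E\<^sup># - \<epsilon> f) / (E - \<epsilon> f)\<close> stays away from zero, so this
  quotient is bounded on the upper half-plane; it is unimodular on the real axis.\<close>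
lemma norm_sharp_minus_scaled_le:
  assumes HB: "hermite_biehler E" and E_real: "\<And>x::real. E (of_real x) \<noteq> 0"
    and "real_entire f" and f_le: "\<And>z. Im z \<ge> 0 \<Longrightarrow> cmod (f z) \<le> cmod (E z)"
    and \<epsilon>: "0 < \<epsilon>" "\<epsilon> < 1" and "Im z \<ge> 0"
  shows "cmod (sharp E z - of_real \<epsilon> * f z) \<le> cmod (E z - of_real \<epsilon> * f z)"
proof -
  define D where "D w = E w - of_real \<epsilon> * f w" for w
  define G where "G w = (sharp E w - of_real \<epsilon> * f w) / D w" for w
  define U where "U = {w. D w \<noteq> 0}"
  have hol_E: "E holomorphic_on UNIV" and hol_f: "f holomorphic_on UNIV"
    using HB \<open>real_entire f\<close> by (auto simp: hermite_biehler_def real_entire_def)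
  have D_ge: "(1 - \<epsilon>) * cmod (E w) \<le> cmod (D w)" if "Im w \<ge> 0" for w
    unfolding D_def using f_le[OF that] \<epsilon> by (intro norm_diff_scaled_ge) auto
  have E_pos: "cmod (E w) > 0" if "Im w \<ge> 0" for w
    using hermite_biehler_nonzero[OF HB E_real that] by simp
  have "D w \<noteq> 0" if "Im w \<ge> 0" for w
    using D_ge[OF that] E_pos[OF that] \<epsilon> by (metis diff_gt_0_iff_gt mult_pos_pos norm_zero not_le)
  then have upper_U: "{w. Im w \<ge> 0} \<subseteq> U"
    by (auto simp: U_def)
  have "open U"
    unfolding U_def D_def using hol_E hol_f
    by (intro open_Collect_neq holomorphic_on_imp_continuous_on holomorphic_intros) auto
  have hol_G: "G holomorphic_on U"
    unfolding G_def U_def D_def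
    by (intro holomorphic_intros holomorphic_on_subset[OF hol_E] holomorphic_on_subset[OF hol_f]
        holomorphic_on_subset[OF holomorphic_on_sharp[OF hol_E]]) auto
  have G_bound: "cmod (G w) \<le> 2 / (1 - \<epsilon>)" if "Im w > 0" for w
  proof -
    have "cmod (sharp E w - of_real \<epsilon> * f w) \<le> cmod (sharp E w) + \<epsilon> * cmod (f w)"
      using norm_triangle_ineq4[of "sharp E w" "of_real \<epsilon> * f w"] \<epsilon> by (simp add: norm_mult)
    also have "\<dots> \<le> 2 * cmod (E w)"
      using hermite_biehler_norm_sharp_less[OF HB that] f_le[of w] \<epsilon> that
        mult_left_le_one_le[of "cmod (f w)" \<epsilon>] by simp
    finally have "cmod (G w) \<le> 2 * cmod (E w) / ((1 - \<epsilon>) * cmod (E w))"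
      unfolding G_def norm_divide using D_ge E_pos \<epsilon> that
      by (intro frac_le) (auto intro: mult_pos_pos)
    then show ?thesis
      using E_pos[of w] that by simp
  qed
  have "cmod (G (of_real x)) \<le> 1" for x
  proof -
    have "sharp E (of_real x) - of_real \<epsilon> * f (of_real x) = cnj (D (of_real x))"
      using \<open>real_entire f\<close> by (simp add: D_def real_entire_def Reals_cnj_iff)
    then show ?thesis
      by (simp add: G_def norm_divide divide_le_eq_1)
  qed
  then have "cmod (G z) \<le> 1"
    using phragmen_lindelof_upper_half_plane[OF \<open>open U\<close> upper_U hol_G G_bound] \<open>Im z \<ge> 0\<close> by blast
  then show ?thesis
    using upper_U \<open>Im z \<ge> 0\<close> by (auto simp: G_def D_def U_def norm_divide divide_le_eq_1)
qed

lemma norm_sharp_minus_le: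
  assumes "hermite_biehler E" "\<And>x::real. E (of_real x) \<noteq> 0"
    and "real_entire f" "\<And>z. Im z \<ge> 0 \<Longrightarrow> cmod (f z) \<le> cmod (E z)" and "Im z \<ge> 0"
  shows "cmod (sharp E z - f z) \<le> cmod (E z - f z)"
proof -
  have "((\<lambda>\<epsilon>. cmod (sharp E z - of_real \<epsilon> * f z)) \<longlongrightarrow> cmod (sharp E z - of_real 1 * f z)) (at_left 1)"
    "((\<lambda>\<epsilon>. cmod (E z - of_real \<epsilon> * f z)) \<longlongrightarrow> cmod (E z - of_real 1 * f z)) (at_left 1)"
    by (intro tendsto_intros)+
  moreover have "\<forall>\<^sub>F \<epsilon> in at_left 1. cmod (sharp E z - of_real \<epsilon> * f z) \<le> cmod (E z - of_real \<epsilon> * f z)"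
    using eventually_at_left_real[OF zero_less_one]
    by eventually_elim (use norm_sharp_minus_scaled_le assms in auto)
  ultimately show ?thesis
    using tendsto_le[OF trivial_limit_at_left_real] by fastforce
qed

lemma Im_f_minus_A_of_div_B_of_nonpos:
  assumes HB: "hermite_biehler E" and "\<And>x::real. E (of_real x) \<noteq> 0"
    and "real_entire f" "\<And>z. Im z \<ge> 0 \<Longrightarrow> cmod (f z) \<le> cmod (E z)" and "Im z > 0"
  shows "Im ((f z - A_of E z) / B_of E z) \<le> 0"
proof -
  define R where "R = (f z - A_of E z) / B_of E z"
  have "B_of E z \<noteq> 0"
    using hermite_biehler_B_of_nonzero[OF HB \<open>Im z > 0\<close>] .
  then have "E z - f z = B_of E z * (\<i> - R)" "sharp E z - f z = - B_of E z * (R + \<i>)"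
    unfolding R_def
    by (simp_all add: E_eq_A_of_plus_ii_B_of[of E z] sharp_eq_A_of_minus_ii_B_of[of E z] field_simps)
  moreover have "cmod (sharp E z - f z) \<le> cmod (E z - f z)"
    using norm_sharp_minus_le assms by simp
  ultimately have "cmod (R + \<i>) \<le> cmod (R - \<i>)"
    using \<open>B_of E z \<noteq> 0\<close> by (simp add: norm_mult norm_minus_commute)
  then show ?thesis
    unfolding R_def by (rule Im_nonpos_of_norm_add_ii_le)
qed

lemma real_entire_of_real: "real_entire f \<Longrightarrow> f (of_real x) = of_real (Re (f (of_real x)))"
  by (simp add: real_entire_def)

lemma Re_f_minus_E_div_Im_E_antimono:
  assumes HB: "hermite_biehler E" and E_real: "\<And>x::real. E (of_real x) \<noteq> 0"
    and f: "real_entire f" and f_le: "\<And>z. Im z \<ge> 0 \<Longrightarrow> cmod (f z) \<le> cmod (E z)"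
    and "s \<le> t" and Im_E_nonzero: "\<And>x. x \<in> {s..t} \<Longrightarrow> Im (E (of_real x)) \<noteq> 0"
  shows "(Re (f (of_real t)) - Re (E (of_real t))) / Im (E (of_real t))
    \<le> (Re (f (of_real s)) - Re (E (of_real s))) / Im (E (of_real s))"
proof -
  define R where "R z = (f z - A_of E z) / B_of E z" for z
  define S where "S = {z. B_of E z \<noteq> 0}"
  have hol_E: "E holomorphic_on UNIV" and hol_f: "f holomorphic_on UNIV"
    using HB f by (auto simp: hermite_biehler_def real_entire_def)
  have hol_B: "B_of E holomorphic_on UNIV"
    using hol_E by (rule holomorphic_on_B_of)
  have "open S"
    unfolding S_def using holomorphic_on_imp_continuous_on[OF hol_B] by (intro open_Collect_neq) auto
  have hol_R: "R holomorphic_on S"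
    unfolding R_def S_def
    by (intro holomorphic_intros holomorphic_on_subset[OF hol_f] holomorphic_on_subset[OF hol_B]
        holomorphic_on_subset[OF holomorphic_on_A_of[OF hol_E]]) auto
  have R_real:
    "R (of_real x) = of_real ((Re (f (of_real x)) - Re (E (of_real x))) / Im (E (of_real x)))" for x
  proof -
    have "f (of_real x) - A_of E (of_real x) = of_real (Re (f (of_real x)) - Re (E (of_real x)))"
      by (metis A_of_of_real of_real_diff real_entire_of_real[OF f])
    then show ?thesis
      by (simp add: R_def B_of_of_real)
  qed
  have "Re (R (of_real t)) \<le> Re (R (of_real s))"
  proof (rule Re_of_real_antimono_of_Im_nonpos_upper[OF hol_R \<open>open S\<close> \<open>s \<le> t\<close>])
    show "of_real x \<in> S \<and> Im (R (of_real x)) = 0" if "x \<in> {s..t}" for x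
      using Im_E_nonzero[OF that] by (simp add: S_def B_of_of_real R_real)
    show "Im (R z) \<le> 0" if "z \<in> S" "Im z > 0" for z
      using Im_f_minus_A_of_div_B_of_nonpos[OF HB E_real f f_le \<open>Im z > 0\<close>] by (simp add: R_def)
  qed
  then show ?thesis
    by (simp add: R_real)
qed

lemma hermite_biehler_Im_B_of_div_A_of_neg:
  assumes "hermite_biehler E" "Im z > 0"
  shows "Im (B_of E z / A_of E z) < 0"
proof -
  have "(v / (2 * \<i>)) / (u / 2) = v / (\<i> * u)" for u v :: complex
    by (cases "u = 0") (simp_all add: field_simps)
  then have "B_of E z / A_of E z = (E z - sharp E z) / (\<i> * (E z + sharp E z))"
    unfolding A_of_def B_of_def .
  then show ?thesis
    using Im_diff_div_ii_add_neg[OF hermite_biehler_norm_sharp_less[OF assms]] by simp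
qed

lemma hermite_biehler_Im_has_real_derivative_neg:
  assumes HB: "hermite_biehler E" and "E 0 \<in> \<real>" "Re (E 0) > 0"
  obtains d where "d < 0" "((\<lambda>t. Im (E (of_real t))) has_real_derivative d) (at 0)"
proof -
  have hol_E: "E holomorphic_on UNIV"
    using HB by (simp add: hermite_biehler_def)
  note hol_A = holomorphic_on_A_of[OF hol_E] and hol_B = holomorphic_on_B_of[OF hol_E]
  have A0: "A_of E 0 = of_real (Re (E 0))" and B0: "B_of E 0 = 0"
    using A_of_of_real[of E 0] B_of_of_real[of E 0] \<open>E 0 \<in> \<real>\<close> by (auto simp: complex_is_Real_iff)
  have "open {z. A_of E z \<noteq> 0}"
    using holomorphic_on_imp_continuous_on[OF hol_A] by (intro open_Collect_neq) auto
  then obtain \<rho> where "\<rho> > 0" and ball_A: "ball 0 \<rho> \<subseteq> {z. A_of E z \<noteq> 0}"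
    using A0 \<open>Re (E 0) > 0\<close> by (auto elim!: openE[of _ 0])
  define g where "g z = B_of E z / A_of E z" for z
  have hol_g: "g holomorphic_on ball 0 \<rho>"
    unfolding g_def using ball_A
    by (intro holomorphic_intros holomorphic_on_subset[OF hol_A] holomorphic_on_subset[OF hol_B]) auto
  have "(g has_field_derivative (deriv (B_of E) 0 * A_of E 0 - B_of E 0 * deriv (A_of E) 0)
      / (A_of E 0 * A_of E 0)) (at 0)"
    unfolding g_def[abs_def] using A0 \<open>Re (E 0) > 0\<close>
    by (intro DERIV_divide holomorphic_derivI[OF hol_A] holomorphic_derivI[OF hol_B]) auto
  then have deriv_g: "deriv g 0 = deriv (B_of E) 0 / of_real (Re (E 0))"
    using A0 B0 \<open>Re (E 0) > 0\<close> by (auto dest!: DERIV_imp_deriv)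
  have "Im (deriv (B_of E) 0) = 0"
    using Im_deriv_of_real_eq_0[OF hol_B, of 0] by (simp add: B_of_of_real)
  then have "Re (deriv g 0) < 0"
    using \<open>\<rho> > 0\<close> B0 hermite_biehler_Im_B_of_div_A_of_neg[OF HB]
    by (intro Re_deriv_neg_of_Im_neg_upper[OF hol_g])
      (auto simp: g_def deriv_g A_of_of_real B_of_of_real simp flip: of_real_divide)
  then have "Re (deriv (B_of E) 0) < 0"
    using \<open>Re (E 0) > 0\<close> by (simp add: deriv_g divide_less_0_iff)
  moreover have "((\<lambda>t. Im (E (of_real t))) has_real_derivative Re (deriv (B_of E) 0)) (at 0)"
    using has_real_derivative_Re_of_real[OF hol_B open_UNIV, of 0] by (simp add: B_of_of_real)
  ultimately show ?thesis
    using that by blast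
qed

text \<open>\<open>|f/E| \<le> 1\<close> on the real axis with equality at \<open>0\<close>, so \<open>Re (f/E)\<close> has a maximum there.\<close>
lemma Re_diff_has_real_derivative_0:
  assumes hol_E: "E holomorphic_on UNIV" and hol_f: "f holomorphic_on UNIV"
    and E_real: "\<And>x::real. E (of_real x) \<noteq> 0"
    and f_le: "\<And>x::real. cmod (f (of_real x)) \<le> cmod (E (of_real x))"
    and "f 0 = E 0" "E 0 \<in> \<real>"
  shows "((\<lambda>t. Re (f (of_real t)) - Re (E (of_real t))) has_real_derivative 0) (at 0)"
proof -
  define F where "F z = f z / E z" for z
  define U where "U = {z. E z \<noteq> 0}"
  have "E 0 \<noteq> 0"
    using E_real[of 0] by simp
  have "open U"
    unfolding U_def using holomorphic_on_imp_continuous_on[OF hol_E] by (intro open_Collect_neq) auto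
  moreover have "F holomorphic_on U"
    unfolding F_def U_def
    by (intro holomorphic_intros holomorphic_on_subset[OF hol_E] holomorphic_on_subset[OF hol_f]) auto
  moreover have "cmod (F (of_real x)) \<le> 1" for x
    using f_le[of x] E_real[of x] by (simp add: F_def norm_divide divide_le_eq_1)
  ultimately have "Re (deriv F (of_real 0)) = 0"
    using \<open>E 0 \<noteq> 0\<close> \<open>f 0 = E 0\<close> by (intro Re_deriv_eq_0_of_norm_of_real_le_1) (auto simp: U_def F_def)
  moreover have "deriv F 0 = (deriv f 0 - deriv E 0) / of_real (Re (E 0))"
  proof -
    have "(F has_field_derivative (deriv f 0 * E 0 - f 0 * deriv E 0) / (E 0 * E 0)) (at 0)"
      unfolding F_def[abs_def] using \<open>E 0 \<noteq> 0\<close>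
      by (intro DERIV_divide holomorphic_derivI[OF hol_f] holomorphic_derivI[OF hol_E]) auto
    then have "deriv F 0 = (deriv f 0 * E 0 - E 0 * deriv E 0) / (E 0 * E 0)"
      using \<open>f 0 = E 0\<close> by (simp add: DERIV_imp_deriv)
    also have "\<dots> = (deriv f 0 - deriv E 0) / of_real (Re (E 0))"
      using \<open>E 0 \<noteq> 0\<close> \<open>E 0 \<in> \<real>\<close> by (simp add: of_real_Re field_simps)
    finally show ?thesis .
  qed
  ultimately have "Re (deriv f 0) - Re (deriv E 0) = 0"
    using \<open>E 0 \<noteq> 0\<close> \<open>E 0 \<in> \<real>\<close> by (auto simp: complex_is_Real_iff complex_eq_iff)
  moreover have "((\<lambda>t. Re (f (of_real t)) - Re (E (of_real t)))
      has_real_derivative Re (deriv f (of_real 0)) - Re (deriv E (of_real 0))) (at 0)"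
    by (intro DERIV_diff has_real_derivative_Re_of_real[OF hol_f] has_real_derivative_Re_of_real[OF hol_E])
      auto
  ultimately show ?thesis
    by simp
qed

lemma nonneg_of_quotient_antimono:
  fixes k b :: "real \<Rightarrow> real"
  assumes cont: "continuous_on UNIV k" "continuous_on UNIV b"
    and k: "(k has_real_derivative 0) (at 0)" "k 0 = 0"
    and b: "(b has_real_derivative d) (at 0)" "d < 0" "b 0 = 0"
    and "bm < 0" "0 < bp" and b_nonzero: "\<And>t. t \<in> {bm<..<0} \<union> {0<..<bp} \<Longrightarrow> b t \<noteq> 0"
    and antimono: "\<And>s t. s \<le> t \<Longrightarrow> (\<And>x. x \<in> {s..t} \<Longrightarrow> b x \<noteq> 0) \<Longrightarrow> k t / b t \<le> k s / b s"
  shows "\<forall>x\<in>{bm..bp}. k x \<ge> 0"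
proof -
  define r where "r x = k x / b x" for x
  have "(r \<longlongrightarrow> 0) (at 0)"
    using tendsto_divide_of_has_real_derivative[OF k(1) b(1)] b(2,3) k(2)
    by (simp add: r_def[abs_def])
  then have lim: "(r \<longlongrightarrow> 0) (at_left 0)" "(r \<longlongrightarrow> 0) (at_right 0)"
    by (simp_all add: filterlim_at_split)
  have "k x \<ge> 0" if "x \<in> {bm<..<bp}" for x
  proof (cases x "0::real" rule: linorder_cases)
    case less
    then have "b x > 0"
      using that b_nonzero by (intro pos_at_left_of_has_real_derivative_neg[OF _ b, where c = bm])
        (auto intro: continuous_on_subset[OF cont(2)])
    moreover have "r x \<ge> 0"
      using lim(1) less that b_nonzero by (intro nonneg_of_antimono_tendsto_0_at_left[of r 0 bm])
        (auto simp: r_def intro!: antimono)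
    ultimately show ?thesis
      by (simp add: r_def zero_le_divide_iff)
  next
    case equal
    then show ?thesis
      using k(2) by simp
  next
    case greater
    then have "b x < 0"
      using that b_nonzero by (intro neg_at_right_of_has_real_derivative_neg[OF _ b, where c = bp])
        (auto intro: continuous_on_subset[OF cont(2)])
    moreover have "r x \<le> 0"
      using lim(2) greater that b_nonzero by (intro nonpos_of_antimono_tendsto_0_at_right[of r 0 bp])
        (auto simp: r_def intro!: antimono)
    ultimately show ?thesis
      by (simp add: r_def divide_le_0_iff)
  qed
  moreover have "closed {x. k x \<ge> 0}"
    using cont(1) by (intro closed_Collect_le continuous_intros) auto
  ultimately have "closure {bm<..<bp} \<subseteq> {x. k x \<ge> 0}"
    by (intro closure_minimal) auto
  then show ?thesis
    using \<open>bm < 0\<close> \<open>0 < bp\<close> by auto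
qed

theorem corollary1:
  fixes E f :: "complex \<Rightarrow> complex" and bm bp :: real
  assumes "hermite_biehler E"
    and "\<forall>x::real. E (of_real x) \<noteq> 0"
    and "E 0 = 1"
    and "f \<in> H_inf E" and "real_entire f"
    and "f 0 = 1" and "sup_norm_real f E = 1"
    and "bm < 0" and "B_of E (of_real bm) = 0"
    and "\<forall>t::real. bm < t \<and> t < 0 \<longrightarrow> B_of E (of_real t) \<noteq> 0"
    and "bp > 0" and "B_of E (of_real bp) = 0"
    and "\<forall>t::real. 0 < t \<and> t < bp \<longrightarrow> B_of E (of_real t) \<noteq> 0"
  shows "\<forall>x::real. bm \<le> x \<and> x \<le> bp \<longrightarrow> Re (A_of E (of_real x)) \<le> Re (f (of_real x))"
proof -
  note HB = \<open>hermite_biehler E\<close> and E_real = assms(2)[rule_format]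
  have hol_E: "E holomorphic_on UNIV" and hol_f: "f holomorphic_on UNIV"
    using HB \<open>real_entire f\<close> by (auto simp: hermite_biehler_def real_entire_def)
  have f_le: "cmod (f z) \<le> cmod (E z)" if "Im z \<ge> 0" for z
    using H_inf_norm_le[OF HB E_real \<open>f \<in> H_inf E\<close> _ that] \<open>sup_norm_real f E = 1\<close> by simp
  define k where "k t = Re (f (of_real t)) - Re (E (of_real t))" for t
  define b where "b t = Im (E (of_real t))" for t
  have "k 0 = 0" "b 0 = 0"
    using \<open>E 0 = 1\<close> \<open>f 0 = 1\<close> by (simp_all add: k_def b_def)
  obtain d where "d < 0" "(b has_real_derivative d) (at 0)"
    using hermite_biehler_Im_has_real_derivative_neg[OF HB] \<open>E 0 = 1\<close> unfolding b_def by auto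
  have "(k has_real_derivative 0) (at 0)"
    using Re_diff_has_real_derivative_0[OF hol_E hol_f E_real] f_le \<open>f 0 = 1\<close> \<open>E 0 = 1\<close>
    unfolding k_def by simp
  have "continuous_on UNIV (\<lambda>t. h (of_real t))" if "h holomorphic_on UNIV" for h
    by (rule continuous_on_compose2[OF holomorphic_on_imp_continuous_on[OF that]]) auto
  then have "continuous_on UNIV k" "continuous_on UNIV b"
    unfolding k_def b_def using hol_E hol_f by (auto intro!: continuous_intros)
  have antimono: "k t / b t \<le> k s / b s" if "s \<le> t" "\<And>x. x \<in> {s..t} \<Longrightarrow> b x \<noteq> 0" for s t
    using Re_f_minus_E_div_Im_E_antimono[OF HB E_real \<open>real_entire f\<close> f_le \<open>s \<le> t\<close>] that(2)
    unfolding k_def b_def by blast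
  have b_nonzero: "b t \<noteq> 0" if "t \<in> {bm<..<0} \<union> {0<..<bp}" for t
    using that assms(10,13) by (auto simp: b_def B_of_of_real)
  have "\<forall>x\<in>{bm..bp}. k x \<ge> 0"
    by (rule nonneg_of_quotient_antimono) fact+
  then show ?thesis
    by (simp add: k_def A_of_of_real)
qed

end
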